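(* Let $P$ be a finite poset. The space of functions $\mathcal{J}(P)\to\mathbb{R}$ that are $0$-mesic under rowmotion is equal to $\operatorname{span}_{\mathbb{R}}\{T_A\colon A\in\mathcal{A}(P)\}$.
   Context: $\mathcal{J}(P)$ is the set of order ideals of $P$ and $\mathcal{A}(P)$ the set of antichains (including the empty antichain). Rowmotion $\rho\colon\mathcal{J}(P)\to\mathcal{J}(P)$ sends $I$ to the order ideal generated by the minimal elements of $P\setminus I$. For $A\in\mathcal{A}(P)$ and $I\in\mathcal{J}(P)$: $T_A^+(I)=1$ if $A\subseteq\min(P\setminus I)$, else $0$; $T_A^-(I)=1$ if $A\subseteq\max(I)$, else $0$; $T_A=T_A^+-T_A^-$. A function is $0$-mesic under rowmotion if its average over every rowmotion orbit is $0$. *)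

theory Defs
  imports Complex_Main "HOL-Library.Function_Algebras"
begin

text \<open>A finite poset is a finite carrier P with a partial order relation le on P
  (pairs (x,y) in le mean x <= y).\<close>

definition order_ideals :: "'a set \<Rightarrow> ('a \<times> 'a) set \<Rightarrow> 'a set set" where
  "order_ideals P le = {I. I \<subseteq> P \<and> (\<forall>x\<in>I. \<forall>y\<in>P. (y, x) \<in> le \<longrightarrow> y \<in> I)}"

definition antichains :: "'a set \<Rightarrow> ('a \<times> 'a) set \<Rightarrow> 'a set set" where
  "antichains P le = {A. A \<subseteq> P \<and> (\<forall>x\<in>A. \<forall>y\<in>A. (x, y) \<in> le \<longrightarrow> x = y)}"

definition min_elems :: "('a \<times> 'a) set \<Rightarrow> 'a set \<Rightarrow> 'a set" where
  "min_elems le S = {x\<in>S. \<forall>y\<in>S. (y, x) \<in> le \<longrightarrow> y = x}"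

definition max_elems :: "('a \<times> 'a) set \<Rightarrow> 'a set \<Rightarrow> 'a set" where
  "max_elems le S = {x\<in>S. \<forall>y\<in>S. (x, y) \<in> le \<longrightarrow> y = x}"

definition gen_ideal :: "'a set \<Rightarrow> ('a \<times> 'a) set \<Rightarrow> 'a set \<Rightarrow> 'a set" where
  "gen_ideal P le S = {y\<in>P. \<exists>x\<in>S. (y, x) \<in> le}"

definition rowmotion :: "'a set \<Rightarrow> ('a \<times> 'a) set \<Rightarrow> 'a set \<Rightarrow> 'a set" where
  "rowmotion P le I = gen_ideal P le (min_elems le (P - I))"

definition rowmotion_orbit :: "'a set \<Rightarrow> ('a \<times> 'a) set \<Rightarrow> 'a set \<Rightarrow> 'a set set" where
  "rowmotion_orbit P le I = {(rowmotion P le ^^ k) I | k. True}"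

definition T_plus :: "'a set \<Rightarrow> ('a \<times> 'a) set \<Rightarrow> 'a set \<Rightarrow> 'a set \<Rightarrow> real" where
  "T_plus P le A I = (if I \<in> order_ideals P le \<and> A \<subseteq> min_elems le (P - I) then 1 else 0)"

definition T_minus :: "'a set \<Rightarrow> ('a \<times> 'a) set \<Rightarrow> 'a set \<Rightarrow> 'a set \<Rightarrow> real" where
  "T_minus P le A I = (if I \<in> order_ideals P le \<and> A \<subseteq> max_elems le I then 1 else 0)"

definition T_stat :: "'a set \<Rightarrow> ('a \<times> 'a) set \<Rightarrow> 'a set \<Rightarrow> 'a set \<Rightarrow> real" where
  "T_stat P le A I = T_plus P le A I - T_minus P le A I"

definition zero_mesic_rowmotion :: "'a set \<Rightarrow> ('a \<times> 'a) set \<Rightarrow> ('a set \<Rightarrow> real) \<Rightarrow> bool" where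
  "zero_mesic_rowmotion P le f \<longleftrightarrow>
     (\<forall>I\<in>order_ideals P le.
        (\<Sum>K\<in>rowmotion_orbit P le I. f K) / real (card (rowmotion_orbit P le I)) = 0)"

text \<open>Real functions on J(P), represented as functions on 'a set vanishing off J(P).\<close>
definition funs_on_ideals :: "'a set \<Rightarrow> ('a \<times> 'a) set \<Rightarrow> ('a set \<Rightarrow> real) set" where
  "funs_on_ideals P le = {f. \<forall>I. I \<notin> order_ideals P le \<longrightarrow> f I = 0}"

definition real_fun_span :: "('b \<Rightarrow> real) set \<Rightarrow> ('b \<Rightarrow> real) set" where
  "real_fun_span S = module.span (\<lambda>c f. \<lambda>x. c * f x) S"

end

theory Submission
  imports Defs "HOL-Combinatorics.Orbits"
begin

(* A function on a finite set with an invertible map f is a coboundary h = g o f - g exactly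
   when it sums to zero over every orbit; on an orbit of length n one can take the potential
   g x = (1/n) * sum_(k<n) k * h (f^k x).  Since T^+_A = T^-_A o rowmotion (the maximal elements
   of rowmotion(I) are the minimal elements of P - I), each T_A is the coboundary of T^-_A, so
   the 0-mesic functions are the image of the coboundary map.  Finally the T^-_A span all functions
   on J(P): an ideal is determined by its antichain of maximal elements, and Moebius inversion on
   the Boolean lattice of subsets of max(I) expresses every indicator of an ideal through the
   functions I |-> [A \<subseteq> max(I)]. *)

lemma self_in_orbit_if_inj_on:
  assumes "finite S" "inj_on f S" "f ` S \<subseteq> S" "x \<in> S"
  shows "x \<in> orbit f x"
proof -
  define p where "p y = (if y \<in> S then f y else y)" for y
  have "bij_betw f S S"
    using endo_inj_surj[OF assms(1,3,2)] assms(2) by (simp add: bij_betw_def)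
  then have "bij_betw p S S"
    by (rule bij_betw_cong[THEN iffD1, rotated]) (simp add: p_def)
  then have "p permutes S"
    by (rule bij_imp_permutes) (simp add: p_def)
  then have "x \<in> orbit p x"
    using assms(1) by (intro permutation_self_in_orbit permutes_imp_permutation)
  moreover have "orbit p x = orbit f x"
    using assms(3,4) by (intro orbit_cong0[of x S]) (auto simp: p_def)
  ultimately show ?thesis
    by simp
qed

lemma
  assumes "x \<in> orbit f x"
  shows funpow_card_orbit: "(f ^^ card (orbit f x)) x = x"
    and sum_orbit_eq_sum_funpow: "(\<Sum>y\<in>orbit f x. h y) = (\<Sum>k<card (orbit f x). h ((f ^^ k) x))"
proof -
  have card: "card (orbit f x) = funpow_dist1 f x x"
    using orbit_conv_funpow_dist1[OF assms] inj_on_funpow_dist1[OF assms] by (simp add: card_image)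
  show "(f ^^ card (orbit f x)) x = x"
    using funpow_dist1_prop[OF assms] card by simp
  show "(\<Sum>y\<in>orbit f x. h y) = (\<Sum>k<card (orbit f x). h ((f ^^ k) x))"
  proof -
    have "(\<Sum>y\<in>orbit f x. h y) = (\<Sum>k\<in>{0..<funpow_dist1 f x x}. h ((f ^^ k) x))"
      by (subst orbit_conv_funpow_dist1[OF assms])
        (rule sum.reindex[OF inj_on_funpow_dist1[OF assms], unfolded comp_def])
    then show ?thesis
      by (simp only: card atLeast0LessThan)
  qed
qed

lemma sum_orbit_coboundary:
  assumes "x \<in> orbit f x"
  shows "(\<Sum>y\<in>orbit f x. g (f y) - g y) = (0 :: 'b::ab_group_add)"
  using sum_lessThan_telescope[of "\<lambda>k. g ((f ^^ k) x)" "card (orbit f x)"]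
  by (simp add: sum_orbit_eq_sum_funpow[OF assms] funpow_card_orbit[OF assms])

lemma sum_lessThan_weighted_shift:
  fixes a :: "nat \<Rightarrow> 'a::comm_ring_1"
  shows "(\<Sum>k<n. of_nat k * a (Suc k))
           = (\<Sum>k<n. of_nat k * a k) + of_nat n * a n - (\<Sum>k<n. a (Suc k))"
  by (induction n) (simp_all add: algebra_simps)

definition orbit_potential :: "('a \<Rightarrow> 'a) \<Rightarrow> ('a \<Rightarrow> 'b::field_char_0) \<Rightarrow> 'a \<Rightarrow> 'b" where
  "orbit_potential f h x =
     (\<Sum>k<card (orbit f x). of_nat k * h ((f ^^ k) x)) / of_nat (card (orbit f x))"

lemma coboundary_orbit_potential:
  fixes h :: "'a \<Rightarrow> 'b::field_char_0"
  assumes x: "x \<in> orbit f x" and zero: "(\<Sum>y\<in>orbit f x. h y) = 0"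
  shows "h x = orbit_potential f h (f x) - orbit_potential f h x"
proof -
  define n where "n = card (orbit f x)"
  define a where "a k = h ((f ^^ k) x)" for k
  have orbit_f: "orbit f (f x) = orbit f x"
    using x by (rule self_in_orbit_step)
  have fx: "f x \<in> orbit f (f x)"
    unfolding orbit_f by (rule orbit.base)
  have "n > 0"
    unfolding n_def using finite_orbit[OF x] orbit_nonempty by (simp add: card_gt_0_iff)
  have pot_fx: "orbit_potential f h (f x) = (\<Sum>k<n. of_nat k * a (Suc k)) / of_nat n"
    unfolding orbit_potential_def orbit_f n_def a_def by (simp add: funpow_swap1)
  have pot_x: "orbit_potential f h x = (\<Sum>k<n. of_nat k * a k) / of_nat n"
    unfolding orbit_potential_def n_def a_def ..
  have "(\<Sum>k<n. a (Suc k)) = 0"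
    using zero sum_orbit_eq_sum_funpow[OF fx, of h]
    unfolding orbit_f n_def a_def by (simp add: funpow_swap1)
  moreover have "a n = h x"
    unfolding a_def n_def using funpow_card_orbit[OF x] by simp
  ultimately show ?thesis
    using \<open>n > 0\<close> unfolding pot_fx pot_x sum_lessThan_weighted_shift
    by (simp add: field_simps)
qed

lemma sum_supersets_alternating:
  assumes "finite S"
  shows "(\<Sum>T | T \<subseteq> S \<and> U \<subseteq> T. (-1) ^ card T)
           = (if U = S then (-1) ^ card S else (0 :: 'a::ring_1))"
proof (cases "U \<subset> S")
  case True
  have "finite {T. T \<subseteq> S \<and> U \<subseteq> T}"
    using assms by (auto intro: finite_subset[of _ "Pow S"])
  moreover have "card {T \<in> {T. T \<subseteq> S \<and> U \<subseteq> T}. even (card T)}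
                   = card {T \<in> {T. T \<subseteq> S \<and> U \<subseteq> T}. odd (card T)}"
    using card_subsupersets_even_odd[OF assms True] by (simp add: conj_assoc)
  ultimately show ?thesis
    using True by (simp add: sum_alternating_cancels)
next
  case False
  then have "{T. T \<subseteq> S \<and> U \<subseteq> T} = (if U = S then {S} else {})"
    by auto
  then show ?thesis
    by simp
qed

lemma sum_fun_apply: "(\<Sum>a\<in>A. F a) x = (\<Sum>a\<in>A. F a x)"
  by (induction A rule: infinite_finite_induct) auto

interpretation real_fun: module "\<lambda>c (f :: 'b \<Rightarrow> real) x. c * f x"
  by unfold_locales (auto simp: fun_eq_iff algebra_simps)

definition rowmotion_coboundary ::
    "'a set \<Rightarrow> ('a \<times> 'a) set \<Rightarrow> ('a set \<Rightarrow> real) \<Rightarrow> 'a set \<Rightarrow> real" where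
  "rowmotion_coboundary P le g I =
     (if I \<in> order_ideals P le then g (rowmotion P le I) - g I else 0)"

lemma module_hom_rowmotion_coboundary:
  "module_hom (\<lambda>c f x. c * f x) (\<lambda>c f x. c * f x) (rowmotion_coboundary P le)"
  unfolding module_hom_iff
  by (auto simp: real_fun.module_axioms rowmotion_coboundary_def fun_eq_iff algebra_simps)

locale finite_poset =
  fixes P :: "'a set" and le :: "('a \<times> 'a) set"
  assumes finite_carrier: "finite P"
    and partial_order: "partial_order_on P le"
    and le_subset: "le \<subseteq> P \<times> P"
begin

abbreviation "\<J> \<equiv> order_ideals P le"
abbreviation "\<A> \<equiv> antichains P le"
abbreviation "\<rho> \<equiv> rowmotion P le"

lemma poset_refl: "x \<in> P \<Longrightarrow> (x, x) \<in> le"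
  using partial_order by (auto simp: partial_order_on_def preorder_on_def refl_on_def)

lemma poset_trans: "(x, y) \<in> le \<Longrightarrow> (y, z) \<in> le \<Longrightarrow> (x, z) \<in> le"
  using partial_order by (auto simp: partial_order_on_def preorder_on_def dest: transD)

lemma poset_antisym: "(x, y) \<in> le \<Longrightarrow> (y, x) \<in> le \<Longrightarrow> x = y"
  using partial_order by (auto simp: partial_order_on_def dest: antisymD)

lemma ideal_subset: "I \<in> \<J> \<Longrightarrow> I \<subseteq> P"
  by (simp add: order_ideals_def)

lemma ideal_down_closed: "I \<in> \<J> \<Longrightarrow> x \<in> I \<Longrightarrow> (y, x) \<in> le \<Longrightarrow> y \<in> I"
  using le_subset by (auto simp: order_ideals_def)

lemma finite_ideals: "finite \<J>"
  using finite_carrier by (auto simp: order_ideals_def intro: finite_subset[of _ "Pow P"])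

lemma finite_antichains: "finite \<A>"
  using finite_carrier by (auto simp: antichains_def intro: finite_subset[of _ "Pow P"])

lemma gen_ideal_in_ideals: "gen_ideal P le S \<in> \<J>"
  by (auto simp: gen_ideal_def order_ideals_def intro: poset_trans)

lemma rowmotion_in_ideals: "\<rho> I \<in> \<J>"
  unfolding rowmotion_def by (rule gen_ideal_in_ideals)

lemma min_elems_antichain: "S \<subseteq> P \<Longrightarrow> min_elems le S \<in> \<A>"
  by (auto simp: min_elems_def antichains_def)

lemma subset_max_elems_antichain: "S \<subseteq> P \<Longrightarrow> B \<subseteq> max_elems le S \<Longrightarrow> B \<in> \<A>"
  unfolding max_elems_def antichains_def by blast

lemma max_elems_gen_ideal:
  assumes M: "M \<in> \<A>"
  shows "max_elems le (gen_ideal P le M) = M"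
proof
  have M_gen: "M \<subseteq> gen_ideal P le M"
    using M by (auto simp: antichains_def gen_ideal_def intro: poset_refl)
  show "max_elems le (gen_ideal P le M) \<subseteq> M"
  proof
    fix x assume x: "x \<in> max_elems le (gen_ideal P le M)"
    then obtain m where "m \<in> M" "(x, m) \<in> le"
      by (auto simp: max_elems_def gen_ideal_def)
    with x M_gen show "x \<in> M"
      by (auto simp: max_elems_def)
  qed
  show "M \<subseteq> max_elems le (gen_ideal P le M)"
  proof
    fix x assume x: "x \<in> M"
    have "y = x" if y: "y \<in> gen_ideal P le M" and xy: "(x, y) \<in> le" for y
    proof -
      obtain m where "m \<in> M" "(y, m) \<in> le"
        using y by (auto simp: gen_ideal_def)
      with x M xy have "m = x"
        by (auto simp: antichains_def intro: poset_trans)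
      with \<open>(y, m) \<in> le\<close> xy show "y = x"
        by (auto intro: poset_antisym)
    qed
    with x M_gen show "x \<in> max_elems le (gen_ideal P le M)"
      by (auto simp: max_elems_def)
  qed
qed

lemma exists_min_elem_below:
  assumes "S \<subseteq> P" "x \<in> S"
  shows "\<exists>m\<in>min_elems le S. (m, x) \<in> le"
proof -
  let ?R = "\<lambda>a b. (a, b) \<in> le \<and> a \<noteq> b"
  have "asymp_on S ?R" "transp_on S ?R"
    by (auto simp: asymp_on_def transp_on_def dest: poset_antisym intro: poset_trans)
  moreover have "finite S"
    using assms(1) finite_carrier by (rule finite_subset)
  moreover have "\<exists>y\<in>S. (y, x) \<in> le"
    using assms by (auto intro: poset_refl)
  ultimately obtain m where "m \<in> S" "(m, x) \<in> le" and "\<forall>y\<in>S. ?R y m \<longrightarrow> (y, x) \<notin> le"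
    using Finite_Set.bex_min_element_with_property[of S ?R "\<lambda>y. (y, x) \<in> le"] by blast
  then show ?thesis
    by (auto simp: min_elems_def intro: poset_trans)
qed

lemma exists_max_elem_above:
  assumes "S \<subseteq> P" "x \<in> S"
  shows "\<exists>m\<in>max_elems le S. (x, m) \<in> le"
proof -
  let ?R = "\<lambda>a b. (a, b) \<in> le \<and> a \<noteq> b"
  have "asymp_on S ?R" "transp_on S ?R"
    by (auto simp: asymp_on_def transp_on_def dest: poset_antisym intro: poset_trans)
  moreover have "finite S"
    using assms(1) finite_carrier by (rule finite_subset)
  moreover have "\<exists>y\<in>S. (x, y) \<in> le"
    using assms by (auto intro: poset_refl)
  ultimately obtain m where "m \<in> S" "(x, m) \<in> le" and "\<forall>y\<in>S. ?R m y \<longrightarrow> (x, y) \<notin> le"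
    using Finite_Set.bex_max_element_with_property[of S ?R "\<lambda>y. (x, y) \<in> le"] by blast
  then show ?thesis
    by (auto simp: max_elems_def intro: poset_trans)
qed

lemma gen_ideal_max_elems: "I \<in> \<J> \<Longrightarrow> gen_ideal P le (max_elems le I) = I"
  using exists_max_elem_above[OF ideal_subset] ideal_subset
  by (auto simp: gen_ideal_def max_elems_def intro: ideal_down_closed) blast

lemma inj_on_max_elems: "inj_on (max_elems le) \<J>"
  by (rule inj_on_inverseI[where g = "gen_ideal P le"]) (rule gen_ideal_max_elems)

lemma complement_ideal_eq_up_min_elems:
  "I \<in> \<J> \<Longrightarrow> P - I = {y\<in>P. \<exists>x\<in>min_elems le (P - I). (x, y) \<in> le}"
  using exists_min_elem_below[of "P - I"]
  by (auto simp: min_elems_def intro: ideal_down_closed)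

lemma max_elems_rowmotion: "I \<in> \<J> \<Longrightarrow> max_elems le (\<rho> I) = min_elems le (P - I)"
  unfolding rowmotion_def by (rule max_elems_gen_ideal) (auto intro: min_elems_antichain)

lemma inj_on_rowmotion: "inj_on \<rho> \<J>"
proof (rule inj_onI)
  fix I K assume I: "I \<in> \<J>" and K: "K \<in> \<J>" and "\<rho> I = \<rho> K"
  then have "min_elems le (P - I) = min_elems le (P - K)"
    using max_elems_rowmotion by metis
  then have "P - I = P - K"
    using complement_ideal_eq_up_min_elems[OF I] complement_ideal_eq_up_min_elems[OF K] by simp
  then show "I = K"
    using ideal_subset[OF I] ideal_subset[OF K] by blast
qed

lemma T_plus_eq_T_minus_rowmotion: "I \<in> \<J> \<Longrightarrow> T_plus P le A I = T_minus P le A (\<rho> I)"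
  using max_elems_rowmotion[of I] rowmotion_in_ideals[of I] by (simp add: T_plus_def T_minus_def)

lemma T_stat_eq_rowmotion_coboundary: "T_stat P le A = rowmotion_coboundary P le (T_minus P le A)"
proof
  fix I
  show "T_stat P le A I = rowmotion_coboundary P le (T_minus P le A) I"
    by (cases "I \<in> \<J>")
      (simp_all add: T_stat_def rowmotion_coboundary_def T_plus_eq_T_minus_rowmotion,
        simp add: T_plus_def T_minus_def)
qed

lemma self_in_orbit_rowmotion: "I \<in> \<J> \<Longrightarrow> I \<in> orbit \<rho> I"
  by (rule self_in_orbit_if_inj_on[OF finite_ideals inj_on_rowmotion])
    (auto intro: rowmotion_in_ideals)

lemma orbit_rowmotion_subset_ideals: "orbit \<rho> I \<subseteq> \<J>"
  by (auto elim: orbit.cases intro: rowmotion_in_ideals)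

lemma zero_mesic_iff_orbit_sums:
  "zero_mesic_rowmotion P le f \<longleftrightarrow> (\<forall>I\<in>\<J>. (\<Sum>K\<in>orbit \<rho> I. f K) = 0)"
  unfolding zero_mesic_rowmotion_def
proof (rule ball_cong[OF refl])
  fix I assume "I \<in> \<J>"
  then have I: "I \<in> orbit \<rho> I"
    by (rule self_in_orbit_rowmotion)
  then have "rowmotion_orbit P le I = orbit \<rho> I" and "card (orbit \<rho> I) \<noteq> 0"
    using orbit_altdef_self_in[OF I] finite_orbit[OF I] orbit_nonempty[of \<rho> I]
    by (simp_all add: rowmotion_orbit_def)
  then show "(\<Sum>K\<in>rowmotion_orbit P le I. f K) / real (card (rowmotion_orbit P le I)) = 0
               \<longleftrightarrow> (\<Sum>K\<in>orbit \<rho> I. f K) = 0"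
    by simp
qed

lemma indicator_ideal_in_span_T_minus:
  assumes K: "K \<in> \<J>"
  shows "(\<lambda>I. if I = K then 1 else 0) \<in> real_fun.span (T_minus P le ` \<A>)"
proof -
  let ?M = "max_elems le K"
  let ?c = "\<lambda>B. (-1) ^ (card B + card ?M) :: real"
  have "(\<lambda>I. if I = K then 1 else 0) = (\<Sum>B\<in>{B\<in>\<A>. ?M \<subseteq> B}. (\<lambda>I. ?c B * T_minus P le B I))"
  proof
    fix I
    show "(if I = K then 1 else 0) = (\<Sum>B\<in>{B\<in>\<A>. ?M \<subseteq> B}. (\<lambda>I. ?c B * T_minus P le B I)) I"
    proof (cases "I \<in> \<J>")
      case True
      have "finite (max_elems le I)"
        using ideal_subset[OF True] finite_carrier
        by (auto simp: max_elems_def intro: finite_subset)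
      have "(\<Sum>B\<in>{B\<in>\<A>. ?M \<subseteq> B}. ?c B * T_minus P le B I)
              = (\<Sum>B\<in>{B\<in>\<A>. ?M \<subseteq> B}. if B \<subseteq> max_elems le I then ?c B else 0)"
        using True by (intro sum.cong) (simp_all add: T_minus_def)
      also have "\<dots> = (\<Sum>B\<in>{B\<in>{B\<in>\<A>. ?M \<subseteq> B}. B \<subseteq> max_elems le I}. ?c B)"
        by (rule sum.inter_filter[symmetric]) (simp add: finite_antichains)
      also have "{B\<in>{B\<in>\<A>. ?M \<subseteq> B}. B \<subseteq> max_elems le I} = {B. B \<subseteq> max_elems le I \<and> ?M \<subseteq> B}"
        using subset_max_elems_antichain[OF ideal_subset[OF True]] by blast
      also have "(\<Sum>B\<in>\<dots>. ?c B)
                   = (-1) ^ card ?M * (\<Sum>B | B \<subseteq> max_elems le I \<and> ?M \<subseteq> B. (-1) ^ card B)"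
        by (simp add: sum_distrib_left power_add mult.commute)
      also have "\<dots> = (if ?M = max_elems le I then 1 else 0)"
        by (simp add: sum_supersets_alternating[OF \<open>finite (max_elems le I)\<close>] flip: power_add)
      also have "\<dots> = (if I = K then 1 else 0)"
        using inj_on_max_elems K True by (auto dest: inj_onD)
      finally show ?thesis
        by (simp add: sum_fun_apply)
    next
      case False
      then show ?thesis
        using K by (auto simp: sum_fun_apply T_minus_def)
    qed
  qed
  also have "\<dots> \<in> real_fun.span (T_minus P le ` \<A>)"
    by (intro real_fun.span_sum real_fun.span_scale[OF real_fun.span_base]) auto
  finally show ?thesis .
qed

lemma funs_on_ideals_eq_span_T_minus: "funs_on_ideals P le = real_fun.span (T_minus P le ` \<A>)"
proof
  show "funs_on_ideals P le \<subseteq> real_fun.span (T_minus P le ` \<A>)"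
  proof
    fix f assume f: "f \<in> funs_on_ideals P le"
    have "f = (\<Sum>K\<in>\<J>. (\<lambda>I. f K * (if I = K then 1 else 0)))"
      using f finite_ideals
      by (simp add: fun_eq_iff sum_fun_apply funs_on_ideals_def mult.commute[of "f _"]
          if_distrib[of "\<lambda>t. t * _"] cong: if_cong)
    also have "\<dots> \<in> real_fun.span (T_minus P le ` \<A>)"
      by (intro real_fun.span_sum real_fun.span_scale indicator_ideal_in_span_T_minus)
    finally show "f \<in> real_fun.span (T_minus P le ` \<A>)" .
  qed
  show "real_fun.span (T_minus P le ` \<A>) \<subseteq> funs_on_ideals P le"
    by (rule real_fun.span_minimal)
      (auto simp: real_fun.subspace_def funs_on_ideals_def T_minus_def)
qed

lemma rowmotion_coboundary_image:
  "rowmotion_coboundary P le ` funs_on_ideals P le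
     = {f \<in> funs_on_ideals P le. zero_mesic_rowmotion P le f}"
proof (intro equalityI subsetI)
  fix f assume "f \<in> rowmotion_coboundary P le ` funs_on_ideals P le"
  then obtain g where f: "f = rowmotion_coboundary P le g"
    by blast
  have "(\<Sum>K\<in>orbit \<rho> I. f K) = 0" if "I \<in> \<J>" for I
  proof -
    have "(\<Sum>K\<in>orbit \<rho> I. f K) = (\<Sum>K\<in>orbit \<rho> I. g (\<rho> K) - g K)"
      using orbit_rowmotion_subset_ideals[of I]
      by (auto simp: f rowmotion_coboundary_def intro!: sum.cong)
    also have "\<dots> = 0"
      using self_in_orbit_rowmotion[OF that] by (rule sum_orbit_coboundary)
    finally show ?thesis .
  qed
  then show "f \<in> {f \<in> funs_on_ideals P le. zero_mesic_rowmotion P le f}"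
    by (simp add: zero_mesic_iff_orbit_sums f funs_on_ideals_def rowmotion_coboundary_def)
next
  fix f assume "f \<in> {f \<in> funs_on_ideals P le. zero_mesic_rowmotion P le f}"
  then have f0: "\<And>I. I \<notin> \<J> \<Longrightarrow> f I = 0"
    and orbit_sums: "\<And>I. I \<in> \<J> \<Longrightarrow> (\<Sum>K\<in>orbit \<rho> I. f K) = 0"
    by (auto simp: funs_on_ideals_def zero_mesic_iff_orbit_sums)
  define g where "g I = (if I \<in> \<J> then orbit_potential \<rho> f I else 0)" for I
  have "f = rowmotion_coboundary P le g"
  proof
    fix I
    show "f I = rowmotion_coboundary P le g I"
      using f0 coboundary_orbit_potential[OF self_in_orbit_rowmotion orbit_sums, of I]
        rowmotion_in_ideals[of I]
      by (auto simp: rowmotion_coboundary_def g_def)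
  qed
  moreover have "g \<in> funs_on_ideals P le"
    by (simp add: g_def funs_on_ideals_def)
  ultimately show "f \<in> rowmotion_coboundary P le ` funs_on_ideals P le"
    by blast
qed

end

theorem theorem6p2:
  fixes P :: "'a set" and le :: "('a \<times> 'a) set"
  assumes "finite P" and "partial_order_on P le" and "le \<subseteq> P \<times> P"
  shows "{f \<in> funs_on_ideals P le. zero_mesic_rowmotion P le f}
           = real_fun_span ((\<lambda>A. T_stat P le A) ` antichains P le)"
proof -
  interpret finite_poset P le
    using assms by unfold_locales
  interpret coboundary: module_hom "\<lambda>c f x. c * f x" "\<lambda>c f x. c * f x" "rowmotion_coboundary P le"
    by (rule module_hom_rowmotion_coboundary)
  have "real_fun_span ((\<lambda>A. T_stat P le A) ` \<A>)
          = real_fun.span (rowmotion_coboundary P le ` T_minus P le ` \<A>)"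
    by (simp add: real_fun_span_def T_stat_eq_rowmotion_coboundary image_image)
  also have "\<dots> = rowmotion_coboundary P le ` real_fun.span (T_minus P le ` \<A>)"
    by (rule coboundary.span_image)
  also have "\<dots> = {f \<in> funs_on_ideals P le. zero_mesic_rowmotion P le f}"
    by (simp flip: funs_on_ideals_eq_span_T_minus add: rowmotion_coboundary_image)
  finally show ?thesis
    by (rule sym)
qed

end
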